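(* Let $\{w^k\}$ be generated by Algorithm 2 (running infinitely). Each accumulation point $\bar w$ of $\{w^k\}$ is feasible for (P) (i.e., $G(\bar w)\in C$ and $\bar w\in D$) provided one of the following holds: (a) $\{\rho_k\}$ is bounded; or (b) there is $B\in\mathbb R$ with $\mathcal L_{\rho_k}(w^{k+1},u^k)\le B$ for all $k\in\mathbb N$.
   Context: Standing setting: $\mathbb W,\mathbb Y$ Euclidean spaces; (P) is $\min f(w)$ s.t. $G(w)\in C$, $w\in D$, with $f\colon\mathbb W\to\mathbb R$, $G\colon\mathbb W\to\mathbb Y$ continuously differentiable, $C\subset\mathbb Y$ nonempty closed convex, $D\subset\mathbb W$ nonempty closed. $P_C$ is the Euclidean projection onto $C$, $d_C(y)=\|y-P_C(y)\|$; $\mathcal N^{\lim}_D(\bar w):=\limsup_{w\to\bar w}\operatorname{cone}(w-\Pi_D(w))$ for $\bar w\in D$ ($\Pi_D$ multivalued projection, outer set limit), $\varnothing$ for $\bar w\notin D$. Augmented Lagrangian $\mathcal L_\rho(w,\lambda):=f(w)+\frac\rho2 d_C^2(G(w)+\lambda/\rho)$; $V_\rho(w,u):=\|G(w)-P_C(G(w)+u/\rho)\|$. Algorithm 2: data $\rho_0>0$, $\beta>1$, $\eta\in(0,1)$, $w^0\in D$, a nonempty bounded set $U\subset\mathbb Y$. For $k=0,1,\dots$: choose $u^k\in U$; compute $w^{k+1}$ and $\varepsilon^{k+1}\in\mathbb W$ with $\varepsilon^{k+1}\in\nabla_w\mathcal L_{\rho_k}(w^{k+1},u^k)+\mathcal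 N^{\lim}_D(w^{k+1})$ (so $w^{k+1}\in D$); set $\lambda^{k+1}:=\rho_k[G(w^{k+1})+u^k/\rho_k-P_C(G(w^{k+1})+u^k/\rho_k)]$; if $k=0$ or $V_{\rho_k}(w^{k+1},u^k)\le\eta V_{\rho_{k-1}}(w^k,u^{k-1})$ set $\rho_{k+1}:=\rho_k$, else $\rho_{k+1}:=\beta\rho_k$. *)

theory Defs
  imports "HOL-Analysis.Analysis"
begin

definition C1_map :: "('a::euclidean_space \<Rightarrow> 'b::euclidean_space) \<Rightarrow> bool" where
  "C1_map F \<longleftrightarrow> (\<exists>F'. (\<forall>x. (F has_derivative blinfun_apply (F' x)) (at x)) \<and> continuous_on UNIV F')"

definition projC :: "'b::euclidean_space set \<Rightarrow> 'b \<Rightarrow> 'b" where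
  "projC C y = closest_point C y"

definition distC :: "'b::euclidean_space set \<Rightarrow> 'b \<Rightarrow> real" where
  "distC C y = norm (y - projC C y)"

definition proj_set :: "'a::euclidean_space set \<Rightarrow> 'a \<Rightarrow> 'a set" where
  "proj_set D w = {z \<in> D. \<forall>z'\<in>D. dist w z \<le> dist w z'}"

definition lim_normal_cone :: "'a::euclidean_space set \<Rightarrow> 'a \<Rightarrow> 'a set" where
  "lim_normal_cone D wb =
     (if wb \<in> D then
        {v. \<exists>ws vs. ws \<longlonglongrightarrow> wb \<and> vs \<longlonglongrightarrow> v \<and>
              (\<forall>k. vs k \<in> cone hull ((\<lambda>z. ws k - z) ` proj_set D (ws k)))}
      else {})"

definition AL :: "('a::euclidean_space \<Rightarrow> real) \<Rightarrow> ('a \<Rightarrow> 'b::euclidean_space) \<Rightarrow> 'b set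
                  \<Rightarrow> real \<Rightarrow> 'a \<Rightarrow> 'b \<Rightarrow> real" where
  "AL f G C \<rho> w lam = f w + \<rho> / 2 * (distC C (G w + (1 / \<rho>) *\<^sub>R lam))\<^sup>2"

definition Vfun :: "('a::euclidean_space \<Rightarrow> 'b::euclidean_space) \<Rightarrow> 'b set
                  \<Rightarrow> real \<Rightarrow> 'a \<Rightarrow> 'b \<Rightarrow> real" where
  "Vfun G C \<rho> w u = norm (G w - projC C (G w + (1 / \<rho>) *\<^sub>R u))"

end

theory Submission
  imports Defs
begin

text \<open>The iterates stay in the closed set \<open>D\<close>, so only \<open>G wbar \<in> C\<close> needs work; it suffices
that \<open>infdist (G (w k)) C\<close> tends to zero along a subsequence converging to \<open>wbar\<close>.
If the penalties stay bounded, the safeguarded update eventually never fires, so the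
infeasibility measure \<open>V\<close> contracts geometrically and dominates that distance.  If they are
unbounded, they tend to infinity by monotonicity, and the bound on the augmented Lagrangian,
together with the boundedness of \<open>f\<close> near \<open>wbar\<close> and of the safeguarded multipliers, forces the
penalty term \<open>dist(G w + u/\<rho>, C)\<^sup>2 \<le> 2(B - f w)/\<rho>\<close> and the shift \<open>u/\<rho>\<close> to vanish.\<close>

lemma C1_map_isCont: "C1_map F \<Longrightarrow> isCont F x"
  unfolding C1_map_def by (meson has_derivative_continuous)

lemma lim_normal_cone_memD: "v \<in> lim_normal_cone D x \<Longrightarrow> x \<in> D"
  unfolding lim_normal_cone_def by (auto split: if_splits)

lemma projC_in: "closed C \<Longrightarrow> C \<noteq> {} \<Longrightarrow> projC C y \<in> C"
  unfolding projC_def by (rule closest_point_in_set)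

lemma infdist_le_Vfun:
  assumes "closed C" "C \<noteq> {}"
  shows "infdist (G w) C \<le> Vfun G C \<rho> w u"
  using infdist_le[OF projC_in[OF assms]] by (simp add: Vfun_def dist_norm)

lemma infdist_le_distC_add:
  assumes "closed C" "C \<noteq> {}"
  shows "infdist y C \<le> distC C (y + v) + norm v"
proof -
  have "infdist y C \<le> infdist (y + v) C + dist y (y + v)"
    by (rule infdist_triangle)
  also have "infdist (y + v) C \<le> distC C (y + v)"
    using infdist_le[OF projC_in[OF assms]] by (simp add: distC_def dist_norm)
  finally show ?thesis by (simp add: dist_norm)
qed

locale penalty_sequence =
  fixes \<rho> :: "nat \<Rightarrow> real" and \<beta> :: real
  assumes pos_0: "\<rho> 0 > 0" and beta_gt_1: "\<beta> > 1"
    and step: "\<And>k. \<rho> (Suc k) = \<rho> k \<or> \<rho> (Suc k) = \<beta> * \<rho> k"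
begin

lemma pos: "\<rho> k > 0"
  by (induction k) (use pos_0 beta_gt_1 step in \<open>metis mult_pos_pos less_trans zero_less_one\<close>)+

lemma mono: "mono \<rho>"
proof (rule mono_iff_le_Suc[THEN iffD2], intro allI)
  fix k show "\<rho> k \<le> \<rho> (Suc k)"
    using step[of k] pos[of k] beta_gt_1 by auto
qed

lemma eventually_constant_if_bounded:
  assumes "bounded (range \<rho>)"
  shows "\<exists>K. \<forall>k\<ge>K. \<rho> (Suc k) = \<rho> k"
proof (rule ccontr)
  assume infinitely_often: "\<not> ?thesis"
  obtain M where M: "\<And>k. \<rho> k \<le> M"
    using assms unfolding bounded_iff by (metis abs_le_D1 rangeI real_norm_def)
  have grows: "\<exists>k. \<rho> 0 * \<beta> ^ n \<le> \<rho> k" for n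
  proof (induction n)
    case (Suc n)
    then obtain k where k: "\<rho> 0 * \<beta> ^ n \<le> \<rho> k" by blast
    from infinitely_often obtain k' where "k \<le> k'" "\<rho> (Suc k') \<noteq> \<rho> k'" by blast
    then have "\<rho> (Suc k') = \<beta> * \<rho> k'" "\<rho> k \<le> \<rho> k'"
      using step[of k'] mono by (auto simp: mono_def)
    then have "\<beta> * (\<rho> 0 * \<beta> ^ n) \<le> \<rho> (Suc k')"
      using k beta_gt_1 by simp
    then show ?case by (auto simp: mult_ac)
  qed auto
  obtain n where "M < \<rho> 0 * \<beta> ^ n"
    using real_arch_pow[OF beta_gt_1, of "M / \<rho> 0"] pos_0 by (auto simp: field_simps)
  moreover obtain k where "\<rho> 0 * \<beta> ^ n \<le> \<rho> k"
    using grows by blast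
  ultimately show False using M[of k] by simp
qed

lemma tendsto_at_top_if_unbounded:
  assumes "\<not> bounded (range \<rho>)"
  shows "filterlim \<rho> at_top sequentially"
proof (subst filterlim_at_top, intro allI)
  fix Z
  obtain k where "Z \<le> \<rho> k"
    using assms unfolding bounded_iff
    by (metis abs_of_pos linorder_not_less nle_le pos rangeE real_norm_def)
  then show "\<forall>\<^sub>F n in sequentially. Z \<le> \<rho> n"
    using mono unfolding eventually_sequentially mono_def by (meson order.trans)
qed

end

lemma eventually_contracting_tendsto_zero:
  fixes a :: "nat \<Rightarrow> real"
  assumes "0 \<le> \<eta>" "\<eta> < 1" "\<And>k. 0 \<le> a k" "\<And>k. K \<le> k \<Longrightarrow> a (Suc k) \<le> \<eta> * a k"
  shows "a \<longlonglongrightarrow> 0"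
proof -
  have geometric: "a (n + K) \<le> \<eta> ^ n * a K" for n
  proof (induction n)
    case (Suc n)
    have "a (Suc n + K) \<le> \<eta> * a (n + K)" using assms(4)[of "n + K"] by simp
    also have "\<dots> \<le> \<eta> * (\<eta> ^ n * a K)" using Suc assms(1) by (rule mult_left_mono)
    finally show ?case by simp
  qed simp
  have "(\<lambda>n. \<eta> ^ n * a K) \<longlonglongrightarrow> 0"
    using assms(1,2) by (intro tendsto_mult_left_zero LIMSEQ_power_zero) auto
  then have "(\<lambda>n. a (n + K)) \<longlonglongrightarrow> 0"
    by (rule Lim_null_comparison[rotated]) (use assms(3) geometric in auto)
  then show ?thesis by (rule LIMSEQ_offset)
qed

text \<open>The update rule of the algorithm, with \<open>a (Suc k)\<close> the infeasibility measure of iteration \<open>k\<close>.\<close>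

lemma infeasibility_tendsto_zero_if_penalty_bounded:
  fixes a \<rho> :: "nat \<Rightarrow> real"
  assumes "\<rho> 0 > 0" "\<beta> > 1" "0 \<le> \<eta>" "\<eta> < 1" "\<And>k. 0 \<le> a k"
    and update: "\<And>k. \<rho> (Suc k) = (if k = 0 \<or> a (Suc k) \<le> \<eta> * a k then \<rho> k else \<beta> * \<rho> k)"
    and "bounded (range \<rho>)"
  shows "a \<longlonglongrightarrow> 0"
proof -
  interpret penalty_sequence \<rho> \<beta>
    using assms(1,2) update by unfold_locales auto
  obtain K where K: "\<And>k. K \<le> k \<Longrightarrow> \<rho> (Suc k) = \<rho> k"
    using eventually_constant_if_bounded[OF assms(7)] by blast
  have "a (Suc k) \<le> \<eta> * a k" if "Suc K \<le> k" for k
    using update[of k] K[of k] that pos[of k] assms(2) by (auto split: if_splits)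
  then show ?thesis by (rule eventually_contracting_tendsto_zero[OF assms(3-5)])
qed

lemma infdist_tendsto_zero_if_AL_bounded:
  fixes x :: "nat \<Rightarrow> 'a::euclidean_space" and u :: "nat \<Rightarrow> 'b::euclidean_space"
  assumes C: "closed C" "C \<noteq> {}"
    and \<rho>: "filterlim \<rho> at_top sequentially"
    and AL_bound: "\<And>j. AL f G C (\<rho> j) (x j) (u j) \<le> B"
    and "convergent (\<lambda>j. f (x j))" and "bounded (range u)"
  shows "(\<lambda>j. infdist (G (x j)) C) \<longlonglongrightarrow> 0"
proof -
  obtain m where f_bound: "\<And>j. m \<le> f (x j)"
    using BseqE[OF convergent_imp_Bseq[OF assms(5)]] by (metis abs_le_D2 real_norm_def minus_le_iff)
  obtain M where u_bound: "\<And>j. norm (u j) \<le> M"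
    using assms(6) unfolding bounded_iff by blast
  define v where "v j = (1 / \<rho> j) *\<^sub>R u j" for j
  define d where "d j = distC C (G (x j) + v j)" for j
  have \<rho>_pos: "\<forall>\<^sub>F j in sequentially. 0 < \<rho> j"
    using \<rho> by (simp add: filterlim_at_top_dense)
  have \<rho>_inf: "filterlim \<rho> at_infinity sequentially"
    using \<rho> by (rule filterlim_at_top_imp_at_infinity)
  have v: "v \<longlonglongrightarrow> 0"
  proof (rule Lim_null_comparison)
    show "\<forall>\<^sub>F j in sequentially. norm (v j) \<le> M / \<rho> j"
      using \<rho>_pos by eventually_elim (use u_bound in \<open>simp add: v_def divide_right_mono\<close>)
    show "(\<lambda>j. M / \<rho> j) \<longlonglongrightarrow> 0" by (rule tendsto_divide_0[OF tendsto_const \<rho>_inf])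
  qed
  have "(\<lambda>j. (d j)\<^sup>2) \<longlonglongrightarrow> 0"
  proof (rule Lim_null_comparison)
    show "\<forall>\<^sub>F j in sequentially. norm ((d j)\<^sup>2) \<le> 2 * (B - m) / \<rho> j"
      using \<rho>_pos
    proof eventually_elim
      case (elim j)
      have "m + \<rho> j / 2 * (d j)\<^sup>2 \<le> B"
        using AL_bound[of j] f_bound[of j] by (simp add: AL_def d_def v_def)
      with elim show ?case by (simp add: field_simps)
    qed
    show "(\<lambda>j. 2 * (B - m) / \<rho> j) \<longlonglongrightarrow> 0" by (rule tendsto_divide_0[OF tendsto_const \<rho>_inf])
  qed
  then have "(\<lambda>j. sqrt ((d j)\<^sup>2)) \<longlonglongrightarrow> 0"
    using tendsto_real_sqrt by fastforce
  then have d: "d \<longlonglongrightarrow> 0"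
    by (simp add: d_def[abs_def] distC_def)
  show ?thesis
  proof (rule Lim_null_comparison)
    show "\<forall>\<^sub>F j in sequentially. norm (infdist (G (x j)) C) \<le> d j + norm (v j)"
      using infdist_le_distC_add[OF C] by (simp add: d_def infdist_nonneg)
    show "(\<lambda>j. d j + norm (v j)) \<longlonglongrightarrow> 0"
      using tendsto_add[OF d tendsto_norm[OF v]] by simp
  qed
qed

lemma shifted_subsequence:
  assumes "strict_mono r" "(w \<circ> r) \<longlonglongrightarrow> l"
  obtains s where "strict_mono s" "(\<lambda>j. w (Suc (s j))) \<longlonglongrightarrow> l"
proof
  have Suc_s: "Suc (r (Suc j) - 1) = r (Suc j)" for j
    using seq_suble[OF assms(1), of "Suc j"] by simp
  show "strict_mono (\<lambda>j. r (Suc j) - 1)"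
    using assms(1) Suc_s by (intro strict_monoI_Suc) (metis Suc_less_eq lessI strict_monoD)
  show "(\<lambda>j. w (Suc (r (Suc j) - 1))) \<longlonglongrightarrow> l"
    unfolding Suc_s using LIMSEQ_Suc[OF assms(2)] by (simp add: comp_def)
qed

lemma mem_if_infdist_tendsto_zero:
  assumes "closed C" "C \<noteq> {}" "isCont G l" "x \<longlonglongrightarrow> l"
    and "(\<lambda>j. infdist (G (x j)) C) \<longlonglongrightarrow> 0"
  shows "G l \<in> C"
proof -
  have "(\<lambda>j. infdist (G (x j)) C) \<longlonglongrightarrow> infdist (G l) C"
    by (intro tendsto_infdist isCont_tendsto_compose[OF assms(3,4)])
  then have "infdist (G l) C = 0" using LIMSEQ_unique assms(5) by blast
  then show ?thesis using in_closed_iff_infdist_zero[OF assms(1,2)] by blast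
qed

theorem mainTheorem7:
  fixes f :: "'a::euclidean_space \<Rightarrow> real"
    and G :: "'a \<Rightarrow> 'b::euclidean_space"
    and C :: "'b set" and D :: "'a set"
    and \<beta> \<eta> :: real and U :: "'b set"
    and w \<epsilon> :: "nat \<Rightarrow> 'a" and u lam :: "nat \<Rightarrow> 'b" and \<rho> :: "nat \<Rightarrow> real"
  assumes f_C1: "C1_map f" and G_C1: "C1_map G"
    and C_ne: "C \<noteq> {}" and C_closed: "closed C" and C_convex: "convex C"
    and D_ne: "D \<noteq> {}" and D_closed: "closed D"
    and rho0: "\<rho> 0 > 0" and beta: "\<beta> > 1" and eta: "0 < \<eta>" "\<eta> < 1"
    and w0: "w 0 \<in> D"
    and U_ne: "U \<noteq> {}" and U_bdd: "bounded U"
    and u_in: "\<And>k. u k \<in> U"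
    and subprob: "\<And>k. \<exists>g. ((\<lambda>x. AL f G C (\<rho> k) x (u k)) has_derivative (\<lambda>h. g \<bullet> h)) (at (w (Suc k)))
                          \<and> \<epsilon> (Suc k) - g \<in> lim_normal_cone D (w (Suc k))"
    and lam_def: "\<And>k. lam (Suc k) = \<rho> k *\<^sub>R (G (w (Suc k)) + (1 / \<rho> k) *\<^sub>R u k
                          - projC C (G (w (Suc k)) + (1 / \<rho> k) *\<^sub>R u k))"
    and rho_upd: "\<And>k. \<rho> (Suc k) =
        (if k = 0 \<or> Vfun G C (\<rho> k) (w (Suc k)) (u k) \<le> \<eta> * Vfun G C (\<rho> (k - 1)) (w k) (u (k - 1))
         then \<rho> k else \<beta> * \<rho> k)"
    and hyp: "bounded (range \<rho>) \<or> (\<exists>B. \<forall>k. AL f G C (\<rho> k) (w (Suc k)) (u k) \<le> B)"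
    and acc: "strict_mono r" "(w \<circ> r) \<longlonglongrightarrow> wbar"
  shows "G wbar \<in> C \<and> wbar \<in> D"
proof
  have "w k \<in> D" for k
    using w0 subprob lim_normal_cone_memD by (cases k) blast+
  then show "wbar \<in> D" using closed_sequentially[OF D_closed _ acc(2)] by simp
  obtain s where s: "strict_mono s" "(\<lambda>j. w (Suc (s j))) \<longlonglongrightarrow> wbar"
    using shifted_subsequence[OF acc] .
  have "(\<lambda>j. infdist (G (w (Suc (s j)))) C) \<longlonglongrightarrow> 0"
  proof (cases "bounded (range \<rho>)")
    case True
    define a where "a k = Vfun G C (\<rho> (k - 1)) (w k) (u (k - 1))" for k
    have "a \<longlonglongrightarrow> 0"
      using rho0 beta eta rho_upd True
      by (intro infeasibility_tendsto_zero_if_penalty_bounded[where \<rho> = \<rho>])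
         (auto simp: a_def Vfun_def)
    then have "(\<lambda>j. a (Suc (s j))) \<longlonglongrightarrow> 0"
      using LIMSEQ_subseq_LIMSEQ[OF LIMSEQ_Suc s(1)] by (simp add: comp_def)
    then show ?thesis
      by (rule Lim_null_comparison[rotated])
         (simp add: a_def infdist_nonneg infdist_le_Vfun[OF C_closed C_ne])
  next
    case False
    interpret penalty_sequence \<rho> \<beta>
      using rho0 beta by unfold_locales (auto simp: rho_upd)
    obtain B where B: "\<And>k. AL f G C (\<rho> k) (w (Suc k)) (u k) \<le> B" using hyp False by blast
    have "filterlim (\<lambda>j. \<rho> (s j)) at_top sequentially"
      using filterlim_compose[OF tendsto_at_top_if_unbounded[OF False] filterlim_subseq[OF s(1)]] .
    moreover have "convergent (\<lambda>j. f (w (Suc (s j))))"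
      using isCont_tendsto_compose[OF C1_map_isCont[OF f_C1] s(2)] by (rule convergentI)
    moreover have "bounded (range (\<lambda>j. u (s j)))"
      using U_bdd u_in by (blast intro: bounded_subset)
    ultimately show ?thesis
      using B by (intro infdist_tendsto_zero_if_AL_bounded[OF C_closed C_ne]) auto
  qed
  then show "G wbar \<in> C"
    using mem_if_infdist_tendsto_zero[OF C_closed C_ne C1_map_isCont[OF G_C1] s(2)] by blast
qed

end
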